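(* Let $N\ge2$, let $u\in C(S^{N-1},(0,\infty))$ be nonconstant and separable in $S^{N-1}$, and let $M\in O(N)$ and $h_1>h_2$ in $[-1,1]$ be such that $u_M^{-1}(\max_{S^{N-1}}u_M)=\{x\in S^{N-1}:x_N\ge h_1\}$, $u_M^{-1}(\min_{S^{N-1}}u_M)=\{x\in S^{N-1}:x_N\le h_2\}$, $u_M$ is constant on each set $\{x\in S^{N-1}:x_N=h\}$, and $\alpha\mapsto u_M(0_{N-2},\cos\alpha,\sin\alpha)$ is nonincreasing on $[\pi/2,3\pi/2]$ (such $M$ exists). Let $H$ be an open half-space in $\mathbb{R}^N$ with $0\in\partial H$. Then: (i) if $M^{-1}(0_{N-1},1)\in H$, then $u(x)\ge u(\sigma_Hx)$ for all $x\in H\cap S^{N-1}$; (ii) if $M^{-1}(0_{N-1},1)\in\mathbb{R}^N\setminus\overline{H}$, then $u(x)\le u(\sigma_Hx)$ for all $x\in H\cap S^{N-1}$.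
   Context: $S^{N-1}$ is the unit sphere in $\mathbb{R}^N$ centered at $0$; $O(N)$ is the orthogonal group; for $M\in O(N)$, $u_M(x):=u(M^{-1}x)$; $0_k$ is the zero vector of $\mathbb{R}^k$; $\overline{H}$ is the closure of $H$. $\sigma_H$ denotes reflection across $\partial H$. A function $u\in C(S^{N-1},\mathbb{R})$ is separable in $S^{N-1}$ if for every open half-space $H$ with $0\in\partial H$, either $u(x)\ge u(\sigma_Hx)$ for all $x\in H\cap S^{N-1}$, or $u(x)\le u(\sigma_Hx)$ for all $x\in H\cap S^{N-1}$. *)

theory Defs
  imports "HOL-Analysis.Analysis"
begin

text \<open>Points of R^N are vectors of type real^'n, where the index type 'n is finite and
linearly ordered; its elements are the coordinates 1..N in increasing order.
The last coordinate (x_N) is the largest index, the penultimate one (x_{N-1})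
is the second largest.\<close>

definition last_idx :: "'n::{finite,linorder}" where
  "last_idx = Max UNIV"

definition penult_idx :: "'n::{finite,linorder}" where
  "penult_idx = Max (UNIV - {last_idx})"

definition hs_reflect :: "'a::real_inner \<Rightarrow> 'a \<Rightarrow> 'a" where
  "hs_reflect a x = x - (2 * (a \<bullet> x) / (a \<bullet> a)) *\<^sub>R a"

text \<open>Open half-spaces H with 0 on the boundary are exactly the sets {x. 0 < a \<bullet> x}, a \<noteq> 0.\<close>
definition separable_sphere :: "('a::real_inner \<Rightarrow> real) \<Rightarrow> bool" where
  "separable_sphere u \<longleftrightarrow>
     (\<forall>a. a \<noteq> 0 \<longrightarrow>
        (\<forall>x\<in>{x. 0 < a \<bullet> x} \<inter> sphere 0 1. u x \<ge> u (hs_reflect a x)) \<or>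
        (\<forall>x\<in>{x. 0 < a \<bullet> x} \<inter> sphere 0 1. u x \<le> u (hs_reflect a x)))"

definition circ_pt :: "real \<Rightarrow> real^'n::{finite,linorder}" where
  "circ_pt t = (\<chi> i. if i = last_idx then sin t else if i = penult_idx then cos t else 0)"

end

theory Submission
  imports Defs
begin

text \<open>After the rotation, u depends only on the height x \<bullet> e along the axis
e = M^-1 e_N, and it is nondecreasing in that height: every height in [-1,1] is
attained on the meridian t \<mapsto> (0, cos t, sin t), t \<in> [\<pi>/2, 3\<pi>/2], along which u
decreases while the height sin t decreases. The reflection across \<partial>H moves a point
x \<in> H by a negative multiple of the normal a, so it lowers the height when e \<in> H
and raises it when e lies strictly on the other side.\<close>

lemma penult_idx_neq_last_idx:
  assumes "CARD('n::{finite,linorder}) \<ge> 2"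
  shows "(penult_idx::'n) \<noteq> last_idx"
proof -
  have "UNIV - {last_idx::'n} \<noteq> {}"
  proof
    assume "UNIV - {last_idx::'n} = {}"
    then have "(UNIV::'n set) = {last_idx}" by auto
    then have "CARD('n) = card {last_idx::'n}" by (rule arg_cong)
    then have "CARD('n) = 1" by simp
    with assms show False by simp
  qed
  then have "(penult_idx::'n) \<in> UNIV - {last_idx}"
    unfolding penult_idx_def by (intro Max_in) auto
  then show ?thesis by auto
qed

lemma norm_circ_pt:
  assumes "CARD('n) \<ge> 2"
  shows "norm (circ_pt t :: real^'n::{finite,linorder}) = 1"
proof -
  have "circ_pt t \<bullet> (circ_pt t :: real^'n::{finite,linorder}) =
        (\<Sum>i\<in>UNIV. (if i = (last_idx::'n::{finite,linorder}) then (sin t)\<^sup>2 else 0)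
                  + (if i = penult_idx then (cos t)\<^sup>2 else 0))"
    unfolding inner_vec_def circ_pt_def using penult_idx_neq_last_idx[OF assms]
    by (intro sum.cong) (auto simp: power2_eq_square)
  also have "\<dots> = 1" by (simp add: sum.distrib)
  finally show ?thesis by (simp add: norm_eq_1)
qed

lemma circ_pt_last_idx [simp]: "(circ_pt t :: real^'n::{finite,linorder}) $ last_idx = sin t"
  by (simp add: circ_pt_def)

lemma norm_hs_reflect:
  fixes a x :: "'a::real_inner"
  assumes "a \<noteq> 0"
  shows "norm (hs_reflect a x) = norm x"
proof -
  have "hs_reflect a x \<bullet> hs_reflect a x = x \<bullet> x"
    unfolding hs_reflect_def using assms
    by (simp add: inner_diff_left inner_diff_right inner_commute field_simps power2_eq_square)
  then show ?thesis by (simp add: norm_eq_sqrt_inner)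
qed

lemma inner_hs_reflect:
  fixes a x e :: "'a::real_inner"
  shows "hs_reflect a x \<bullet> e = x \<bullet> e - 2 * (a \<bullet> x) / (a \<bullet> a) * (a \<bullet> e)"
  unfolding hs_reflect_def by (simp add: inner_diff_left)

lemma inner_hs_reflect_le:
  fixes a x e :: "'a::real_inner"
  assumes "0 \<le> a \<bullet> x" "0 \<le> a \<bullet> e"
  shows "hs_reflect a x \<bullet> e \<le> x \<bullet> e"
  using assms by (simp add: inner_hs_reflect)

lemma inner_hs_reflect_ge:
  fixes a x e :: "'a::real_inner"
  assumes "0 \<le> a \<bullet> x" "a \<bullet> e \<le> 0"
  shows "x \<bullet> e \<le> hs_reflect a x \<bullet> e"
proof -
  have "2 * (a \<bullet> x) * (a \<bullet> e) \<le> 0"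
    using assms by (simp add: mult_nonneg_nonpos)
  then show ?thesis
    by (simp add: inner_hs_reflect divide_nonpos_nonneg)
qed

lemma matrix_inv_orthogonal_matrix:
  fixes M :: "real^'n^'n"
  assumes "orthogonal_matrix M"
  shows "matrix_inv M = transpose M"
proof -
  have MT: "transpose M ** M = mat 1" "M ** transpose M = mat 1"
    using assms by (auto simp: orthogonal_matrix_def)
  have "M ** matrix_inv M = mat 1 \<and> matrix_inv M ** M = mat 1"
    unfolding matrix_inv_def by (rule someI[where x="transpose M"]) (use MT in auto)
  then have "matrix_inv M ** M = mat 1" by blast
  then have "matrix_inv M ** (M ** transpose M) = transpose M"
    by (simp add: matrix_mul_assoc)
  then show ?thesis using MT by simp
qed

lemma le_if_last_idx_le_on_sphere:
  fixes v :: "real^'n::{finite,linorder} \<Rightarrow> real"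
  assumes "CARD('n) \<ge> 2"
    and levels: "\<forall>h. \<forall>x\<in>sphere 0 1. \<forall>y\<in>sphere 0 1.
                   x $ last_idx = h \<and> y $ last_idx = h \<longrightarrow> v x = v y"
    and mono: "\<forall>s t. pi/2 \<le> s \<and> s \<le> t \<and> t \<le> 3*pi/2 \<longrightarrow> v (circ_pt t) \<le> v (circ_pt s)"
    and y: "y \<in> sphere 0 1" and z: "z \<in> sphere 0 1"
    and yz: "y $ last_idx \<le> z $ last_idx"
  shows "v y \<le> v z"
proof -
  have bounds: "\<bar>y $ last_idx\<bar> \<le> 1" "\<bar>z $ last_idx\<bar> \<le> 1"
    using component_le_norm_cart[of y] component_le_norm_cart[of z] y z by auto
  define s where "s = pi - arcsin (z $ last_idx)"
  define t where "t = pi - arcsin (y $ last_idx)"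
  have sin_s: "sin s = z $ last_idx" and sin_t: "sin t = y $ last_idx"
    unfolding s_def t_def using bounds by simp_all
  have "arcsin (y $ last_idx) \<le> arcsin (z $ last_idx)"
    using bounds yz by (intro arcsin_le_arcsin) auto
  moreover have "arcsin (z $ last_idx) \<le> pi/2" "-(pi/2) \<le> arcsin (y $ last_idx)"
    using arcsin_bounded[of "z $ last_idx"] arcsin_bounded[of "y $ last_idx"] bounds by auto
  ultimately have "pi/2 \<le> s" "s \<le> t" "t \<le> 3*pi/2"
    unfolding s_def t_def by linarith+
  then have "v (circ_pt t) \<le> v (circ_pt s)"
    using mono[rule_format, of s t] by blast
  moreover have "v y = v (circ_pt t)"
    using levels[rule_format, of y "circ_pt t"] y sin_t norm_circ_pt[OF assms(1)]
    by simp
  moreover have "v z = v (circ_pt s)"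
    using levels[rule_format, of z "circ_pt s"] z sin_s norm_circ_pt[OF assms(1)]
    by simp
  ultimately show ?thesis by simp
qed

lemma le_if_inner_le_on_sphere:
  fixes u :: "real^'n \<Rightarrow> real" and M :: "real^'n^'n"
  assumes "orthogonal_matrix M"
    and mono: "\<And>y z. y \<in> sphere 0 1 \<Longrightarrow> z \<in> sphere 0 1 \<Longrightarrow> y $ k \<le> z $ k
                \<Longrightarrow> u (transpose M *v y) \<le> u (transpose M *v z)"
    and "r \<in> sphere 0 1" "x \<in> sphere 0 1"
    and "r \<bullet> (transpose M *v axis k 1) \<le> x \<bullet> (transpose M *v axis k 1)"
  shows "u r \<le> u x"
proof -
  have orth: "orthogonal_transformation (\<lambda>w. M *v w)"
    using assms(1) by (simp add: orthogonal_transformation_matrix)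
  have cancel: "transpose M *v (M *v w) = w" for w
    using assms(1) by (simp add: matrix_vector_mul_assoc orthogonal_matrix)
  have height: "w \<bullet> (transpose M *v axis k 1) = (M *v w) $ k" for w
  proof -
    have "w \<bullet> (transpose M *v axis k 1) = (axis k 1 v* M) \<bullet> w"
      by (simp add: inner_commute)
    also have "\<dots> = (M *v w) $ k"
      by (simp add: dot_lmul_matrix inner_axis')
    finally show ?thesis .
  qed
  have "norm (M *v w) = norm w" for w
    using orth by (simp add: orthogonal_transformation)
  then have "M *v r \<in> sphere 0 1" "M *v x \<in> sphere 0 1"
    using assms(3,4) by simp_all
  moreover have "(M *v r) $ k \<le> (M *v x) $ k"
    using assms(5) by (simp only: height)
  ultimately have "u (transpose M *v (M *v r)) \<le> u (transpose M *v (M *v x))"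
    by (rule mono)
  then show ?thesis by (simp only: cancel)
qed

theorem corollary2p3:
  fixes u :: "real^('n::{finite,linorder}) \<Rightarrow> real"
    and M :: "real^('n::{finite,linorder})^('n::{finite,linorder})"
    and h1 h2 :: real
    and a :: "real^('n::{finite,linorder})"
    and H :: "(real^('n::{finite,linorder})) set"
  assumes N2: "CARD('n::{finite,linorder}) \<ge> 2"
    and cont: "continuous_on (sphere 0 1) u"
    and pos: "\<forall>x\<in>sphere 0 1. u x > 0"
    and noncst: "\<exists>x\<in>sphere 0 1. \<exists>y\<in>sphere 0 1. u x \<noteq> u y"
    and sep: "separable_sphere u"
    and orth: "orthogonal_matrix M"
    and h12: "h2 < h1" "-1 \<le> h2" "h1 \<le> 1"
    and maxset: "{x\<in>sphere 0 1. u (matrix_inv M *v x) = (SUP y\<in>sphere 0 1. u (matrix_inv M *v y))}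
                 = {x\<in>sphere 0 1. x $ last_idx \<ge> h1}"
    and minset: "{x\<in>sphere 0 1. u (matrix_inv M *v x) = (INF y\<in>sphere 0 1. u (matrix_inv M *v y))}
                 = {x\<in>sphere 0 1. x $ last_idx \<le> h2}"
    and levels: "\<forall>h. \<forall>x\<in>sphere 0 1. \<forall>y\<in>sphere 0 1.
                   x $ last_idx = h \<and> y $ last_idx = h \<longrightarrow>
                   u (matrix_inv M *v x) = u (matrix_inv M *v y)"
    and mono: "\<forall>s t. pi/2 \<le> s \<and> s \<le> t \<and> t \<le> 3*pi/2 \<longrightarrow>
                 u (matrix_inv M *v circ_pt t) \<le> u (matrix_inv M *v circ_pt s)"
    and a: "a \<noteq> 0"
    and H: "H = {x. 0 < a \<bullet> x}"
  shows "(matrix_inv M *v axis last_idx 1 \<in> H \<longrightarrow>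
            (\<forall>x\<in>H \<inter> sphere 0 1. u x \<ge> u (hs_reflect a x)))
       \<and> (matrix_inv M *v axis last_idx 1 \<in> UNIV - closure H \<longrightarrow>
            (\<forall>x\<in>H \<inter> sphere 0 1. u x \<le> u (hs_reflect a x)))"
proof -
  define e where "e = transpose M *v axis last_idx 1"
  note P = matrix_inv_orthogonal_matrix[OF orth]
  have by_last_idx: "u (matrix_inv M *v y) \<le> u (matrix_inv M *v z)"
    if "y \<in> sphere 0 1" "z \<in> sphere 0 1" "y $ last_idx \<le> z $ last_idx" for y z
    using le_if_last_idx_le_on_sphere[OF N2 levels mono that] .
  have by_height: "u r \<le> u x" if "r \<in> sphere 0 1" "x \<in> sphere 0 1" "r \<bullet> e \<le> x \<bullet> e" for r x
    using le_if_inner_le_on_sphere[where u=u, OF orth by_last_idx[unfolded P] that[unfolded e_def]] .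
  have reflect_sphere: "hs_reflect a x \<in> sphere 0 1" if "x \<in> sphere 0 1" for x
    using that norm_hs_reflect[OF a] by simp
  show ?thesis
    unfolding H P e_def[symmetric]
  proof (intro conjI impI ballI)
    fix x assume "e \<in> {x. 0 < a \<bullet> x}" and x: "x \<in> {x. 0 < a \<bullet> x} \<inter> sphere 0 1"
    then have "hs_reflect a x \<bullet> e \<le> x \<bullet> e"
      by (intro inner_hs_reflect_le) auto
    then show "u (hs_reflect a x) \<le> u x"
      using x by (intro by_height reflect_sphere) auto
  next
    fix x assume "e \<in> UNIV - closure {x. 0 < a \<bullet> x}" and x: "x \<in> {x. 0 < a \<bullet> x} \<inter> sphere 0 1"
    then have "x \<bullet> e \<le> hs_reflect a x \<bullet> e"
      using a by (intro inner_hs_reflect_ge) auto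
    then show "u x \<le> u (hs_reflect a x)"
      using x by (intro by_height reflect_sphere) auto
  qed
qed

end
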